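(* Suppose $C\in\mathcal{C}^3_{\rm c}$ is not simplified. Then there exists a simplified copula $D\in\mathcal{C}^3_{\rm S}$ with $d_\infty(C,D)<d_\infty(C,\psi(C))$.
   Context: $\mathbb{I}=[0,1]$, $\lambda$ Lebesgue measure; $d_\infty(C_1,C_2)=\max_{\mathbf{x}\in\mathbb{I}^3}|C_1(\mathbf{x})-C_2(\mathbf{x})|$. Points of $\mathbb{I}^3$ are written $(\mathbf{u},v)$, $\mathbf{u}=(u_1,u_2)$. For a three-dimensional copula $C$, $K_C$ is (a version of) the regular conditional distribution of $(U_1,U_2)$ given $U_3=v$, $(U_1,U_2,U_3)\sim C$; $F_{1|3}(u_1|t)=K_C(t,[0,u_1]\times\mathbb{I})$, $F_{2|3}(u_2|t)=K_C(t,\mathbb{I}\times[0,u_2])$. By Sklar's theorem, for $\lambda$-a.e. $t$ there is a bivariate copula $C^t_{12;3}$ with $K_C(t,[\mathbf{0},\mathbf{u}])=C^t_{12;3}(F_{1|3}(u_1|t),F_{2|3}(u_2|t))$ for all $\mathbf{u}$. $\mathcal{C}^3_{\rm c}$ is the set of three-dimensional copulas for which $F_{1|3}(\cdot|t)$ and $F_{2|3}(\cdot|t)$ are continuous for $\lambda$-a.e. $t$ (then $C^t_{12;3}$ is unique for a.e. $t$). $C$ is simplified if $C\in\mathcal{C}^3_{\rm c}$ and there is a bivariate copula $A$ with $C(\mathbf{u},v)=\int_{[0,v]}A(F_{1|3}(u_1|t),F_{2|3}(u_2|t))\,d\lambda(t)$ for all $(\mathbf{u},v)$; $\mathcal{C}^3_{\rm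 S}$ is the set of simplified copulas. For $C\in\mathcal{C}^3_{\rm c}$, the partial copula is $C_p(\mathbf{s})=\int_{\mathbb{I}}C^t_{12;3}(\mathbf{s})\,d\lambda(t)$ and the partial vine copula is $\psi(C)(\mathbf{u},v)=\int_{[0,v]}C_p(F_{1|3}(u_1|t),F_{2|3}(u_2|t))\,d\lambda(t)$. *)

theory Defs
  imports "HOL-Probability.Probability"
begin

definition copula2 :: "(real \<Rightarrow> real \<Rightarrow> real) \<Rightarrow> bool" where
  "copula2 A \<longleftrightarrow>
     (\<forall>u\<in>{0..1}. A u 0 = 0 \<and> A 0 u = 0 \<and> A u 1 = u \<and> A 1 u = u) \<and>
     (\<forall>u1\<in>{0..1}. \<forall>u2\<in>{0..1}. \<forall>v1\<in>{0..1}. \<forall>v2\<in>{0..1}.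
        u1 \<le> u2 \<longrightarrow> v1 \<le> v2 \<longrightarrow> A u2 v2 - A u1 v2 - A u2 v1 + A u1 v1 \<ge> 0)"

definition copula3 :: "(real \<Rightarrow> real \<Rightarrow> real \<Rightarrow> real) \<Rightarrow> bool" where
  "copula3 C \<longleftrightarrow>
     (\<forall>x\<in>{0..1}. \<forall>y\<in>{0..1}. C 0 x y = 0 \<and> C x 0 y = 0 \<and> C x y 0 = 0) \<and>
     (\<forall>x\<in>{0..1}. C x 1 1 = x \<and> C 1 x 1 = x \<and> C 1 1 x = x) \<and>
     (\<forall>a1\<in>{0..1}. \<forall>b1\<in>{0..1}. \<forall>a2\<in>{0..1}. \<forall>b2\<in>{0..1}. \<forall>a3\<in>{0..1}. \<forall>b3\<in>{0..1}.
        a1 \<le> b1 \<longrightarrow> a2 \<le> b2 \<longrightarrow> a3 \<le> b3 \<longrightarrow>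
        C b1 b2 b3 - C a1 b2 b3 - C b1 a2 b3 - C b1 b2 a3
          + C a1 a2 b3 + C a1 b2 a3 + C b1 a2 a3 - C a1 a2 a3 \<ge> 0)"

text \<open>K is a version of the regular conditional distribution of (U1,U2) given U3 = t:
  a Markov kernel from [0,1] to [0,1]^2 with
  C(u1,u2,v) = \<integral>_[0,v] K(t,[0,u1]\<times>[0,u2]) d\<lambda>(t).\<close>
definition cond_kernel :: "(real \<Rightarrow> real \<Rightarrow> real \<Rightarrow> real) \<Rightarrow> (real \<Rightarrow> (real \<times> real) measure) \<Rightarrow> bool" where
  "cond_kernel C K \<longleftrightarrow>
     K \<in> measurable (restrict_space borel {0..1}) (subprob_algebra borel) \<and>
     (\<forall>t\<in>{0..1}. prob_space (K t) \<and> emeasure (K t) ({0..1} \<times> {0..1}) = 1) \<and>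
     (\<forall>u1\<in>{0..1}. \<forall>u2\<in>{0..1}. \<forall>v\<in>{0..1}.
        C u1 u2 v = (LINT t:{0..v}|lborel. measure (K t) ({0..u1} \<times> {0..u2})))"

definition F13 :: "(real \<Rightarrow> (real \<times> real) measure) \<Rightarrow> real \<Rightarrow> real \<Rightarrow> real" where
  "F13 K t u1 = measure (K t) ({0..u1} \<times> {0..1})"

definition F23 :: "(real \<Rightarrow> (real \<times> real) measure) \<Rightarrow> real \<Rightarrow> real \<Rightarrow> real" where
  "F23 K t u2 = measure (K t) ({0..1} \<times> {0..u2})"

text \<open>Continuity of the conditional marginals for a.e. t (membership in C^3_c, given a version K).\<close>
definition cont_margins :: "(real \<Rightarrow> (real \<times> real) measure) \<Rightarrow> bool" where
  "cont_margins K \<longleftrightarrow>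
     (AE t in lborel. t \<in> {0..1} \<longrightarrow>
        continuous_on {0..1} (F13 K t) \<and> continuous_on {0..1} (F23 K t))"

definition in_Cc :: "(real \<Rightarrow> real \<Rightarrow> real \<Rightarrow> real) \<Rightarrow> bool" where
  "in_Cc C \<longleftrightarrow> copula3 C \<and> (\<exists>K. cond_kernel C K \<and> cont_margins K)"

text \<open>Conditional copula C^t_{12;3} (Sklar); unique for a.e. t when C is in C^3_c.\<close>
definition cond_copula :: "(real \<Rightarrow> (real \<times> real) measure) \<Rightarrow> real \<Rightarrow> real \<Rightarrow> real \<Rightarrow> real" where
  "cond_copula K t = (SOME A. copula2 A \<and>
      (\<forall>u1\<in>{0..1}. \<forall>u2\<in>{0..1}.
         measure (K t) ({0..u1} \<times> {0..u2}) = A (F13 K t u1) (F23 K t u2)))"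

definition partial_copula :: "(real \<Rightarrow> (real \<times> real) measure) \<Rightarrow> real \<Rightarrow> real \<Rightarrow> real" where
  "partial_copula K s1 s2 = (LINT t:{0..1}|lebesgue. cond_copula K t s1 s2)"

definition pvc :: "(real \<Rightarrow> (real \<times> real) measure) \<Rightarrow> real \<Rightarrow> real \<Rightarrow> real \<Rightarrow> real" where
  "pvc K u1 u2 v = (LINT t:{0..v}|lebesgue. partial_copula K (F13 K t u1) (F23 K t u2))"

definition simplified :: "(real \<Rightarrow> real \<Rightarrow> real \<Rightarrow> real) \<Rightarrow> bool" where
  "simplified C \<longleftrightarrow> copula3 C \<and>
     (\<exists>K. cond_kernel C K \<and> cont_margins K \<and>
        (\<exists>A. copula2 A \<and>
           (\<forall>u1\<in>{0..1}. \<forall>u2\<in>{0..1}. \<forall>v\<in>{0..1}.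
              C u1 u2 v = (LINT t:{0..v}|lebesgue. A (F13 K t u1) (F23 K t u2)))))"

definition d_inf :: "(real \<Rightarrow> real \<Rightarrow> real \<Rightarrow> real) \<Rightarrow> (real \<Rightarrow> real \<Rightarrow> real \<Rightarrow> real) \<Rightarrow> real" where
  "d_inf C D = (SUP x\<in>{0..1} \<times> {0..1} \<times> {0..1}. \<bar>C (fst x) (fst (snd x)) (snd (snd x))
                                              - D (fst x) (fst (snd x)) (snd (snd x))\<bar>)"

end

theory Submission
  imports Defs
begin

text \<open>
  If C agreed with its partial vine copula \<psi>(C) on the unit cube, C would be simplified, since
  the partial copula, the average over t of the conditional copulas, is itself a bivariate
  copula. Measurability in t of the conditional copulas comes from Sklar's theorem: with
  continuous margins the copula is an infimum over countably many rational points. Hence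
  d_inf(C, \<psi>(C)) > 0, and it suffices that simplified copulas are dense for d_inf.

  Given n, cut the slab k/n \<le> t < (k+1)/n of the conditioning variable into n^2 consecutive
  intervals, one for each grid cell (i, j, k), whose length is the C-mass of that cell; for t in
  the interval of (i, j, k) let (U1, U2) be uniform on the diagonal of the square
  [i/n, (i+1)/n] \<times> [j/n, (j+1)/n]. The resulting copula D_n has the conditional copula min for
  every t, so it is simplified, and it agrees with C on the grid of mesh 1/n. As copulas are
  1-Lipschitz in each coordinate, d_inf(C, D_n) \<le> 6/n.
\<close>

section \<open>Copulas\<close>

definition vol3 :: "(real \<Rightarrow> real \<Rightarrow> real \<Rightarrow> real) \<Rightarrow> real \<Rightarrow> real \<Rightarrow> real \<Rightarrow> real \<Rightarrow> real \<Rightarrow> real \<Rightarrow> real" where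
  "vol3 C a1 b1 a2 b2 a3 b3 = C b1 b2 b3 - C a1 b2 b3 - C b1 a2 b3 - C b1 b2 a3
     + C a1 a2 b3 + C a1 b2 a3 + C b1 a2 a3 - C a1 a2 a3"

lemma
  assumes "copula3 C"
  shows copula3_grounded: "\<And>x y. x \<in> {0..1} \<Longrightarrow> y \<in> {0..1} \<Longrightarrow> C 0 x y = 0 \<and> C x 0 y = 0 \<and> C x y 0 = 0"
    and copula3_margins: "\<And>x. x \<in> {0..1} \<Longrightarrow> C x 1 1 = x \<and> C 1 x 1 = x \<and> C 1 1 x = x"
    and copula3_vol3_nonneg: "\<And>a1 b1 a2 b2 a3 b3. {a1, b1, a2, b2, a3, b3} \<subseteq> {0..1} \<Longrightarrow>
          a1 \<le> b1 \<Longrightarrow> a2 \<le> b2 \<Longrightarrow> a3 \<le> b3 \<Longrightarrow> 0 \<le> vol3 C a1 b1 a2 b2 a3 b3"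
  using assms unfolding copula3_def vol3_def by auto

lemma copula3_swap12: "copula3 C \<Longrightarrow> copula3 (\<lambda>x y z. C y x z)"
  unfolding copula3_def by (smt (verit, best))

lemma copula3_swap13: "copula3 C \<Longrightarrow> copula3 (\<lambda>x y z. C z y x)"
  unfolding copula3_def by (smt (verit, best))

lemma copula3_increment1_bounds:
  assumes C: "copula3 C" and "{x, x', y, z} \<subseteq> {0..1}" and "x \<le> x'"
  shows "0 \<le> C x' y z - C x y z \<and> C x' y z - C x y z \<le> x' - x"
proof -
  have "0 \<le> vol3 C x x' 0 y 0 z" "0 \<le> vol3 C x x' y 1 0 z" "0 \<le> vol3 C x x' 0 1 z 1"
    using assms by (auto intro!: copula3_vol3_nonneg)
  then show ?thesis
    using assms copula3_grounded[OF C] copula3_margins[OF C] by (auto simp: vol3_def)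
qed

lemma copula3_lipschitz:
  assumes C: "copula3 C" and "{x, y, z, x', y', z'} \<subseteq> {0..1}"
  shows "\<bar>C x y z - C x' y' z'\<bar> \<le> \<bar>x - x'\<bar> + \<bar>y - y'\<bar> + \<bar>z - z'\<bar>"
proof -
  have lip1: "\<bar>D a b c - D a' b c\<bar> \<le> \<bar>a - a'\<bar>" if "copula3 D" "{a, a', b, c} \<subseteq> {0..1}" for D a a' b c
    using copula3_increment1_bounds[OF that(1), of a a' b c]
      copula3_increment1_bounds[OF that(1), of a' a b c] that(2)
    by (cases "a \<le> a'") auto
  have "\<bar>C x y z - C x' y z\<bar> \<le> \<bar>x - x'\<bar>"
    using lip1[OF C] assms by auto
  moreover have "\<bar>C x' y z - C x' y' z\<bar> \<le> \<bar>y - y'\<bar>"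
    using lip1[OF copula3_swap12[OF C], of y y' x' z] assms by auto
  moreover have "\<bar>C x' y' z - C x' y' z'\<bar> \<le> \<bar>z - z'\<bar>"
    using lip1[OF copula3_swap13[OF C], of z z' y' x'] assms by auto
  ultimately show ?thesis by linarith
qed

lemma copula3_abs_le_1:
  assumes C: "copula3 C" and "{x, y, z} \<subseteq> {0..1}"
  shows "\<bar>C x y z\<bar> \<le> 1"
  using copula3_lipschitz[OF C, of x y z 0 y z] copula3_grounded[OF C, of y z] assms by auto

lemma
  assumes "copula2 A"
  shows copula2_boundary: "\<And>u. u \<in> {0..1} \<Longrightarrow> A u 0 = 0 \<and> A 0 u = 0 \<and> A u 1 = u \<and> A 1 u = u"
    and copula2_increasing: "\<And>u1 u2 v1 v2. {u1, u2, v1, v2} \<subseteq> {0..1} \<Longrightarrow> u1 \<le> u2 \<Longrightarrow> v1 \<le> v2 \<Longrightarrow>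
          0 \<le> A u2 v2 - A u1 v2 - A u2 v1 + A u1 v1"
  using assms unfolding copula2_def by auto

lemma copula2_lipschitz:
  assumes A: "copula2 A" and "{a, b, a', b'} \<subseteq> {0..1}"
  shows "\<bar>A a b - A a' b'\<bar> \<le> \<bar>a - a'\<bar> + \<bar>b - b'\<bar>"
proof -
  have inc1: "0 \<le> A y v - A x v \<and> A y v - A x v \<le> y - x" if "{x, y, v} \<subseteq> {0..1}" "x \<le> y" for x y v
    using copula2_increasing[OF A, of x y 0 v] copula2_increasing[OF A, of x y v 1]
      copula2_boundary[OF A] that
    by auto
  have inc2: "0 \<le> A v y - A v x \<and> A v y - A v x \<le> y - x" if "{x, y, v} \<subseteq> {0..1}" "x \<le> y" for x y v
    using copula2_increasing[OF A, of 0 v x y] copula2_increasing[OF A, of v 1 x y]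
      copula2_boundary[OF A] that
    by auto
  have "\<bar>A a b - A a' b\<bar> \<le> \<bar>a - a'\<bar>"
    using inc1[of a a' b] inc1[of a' a b] assms by (cases "a \<le> a'") auto
  moreover have "\<bar>A a' b - A a' b'\<bar> \<le> \<bar>b - b'\<bar>"
    using inc2[of b b' a'] inc2[of b' b a'] assms by (cases "b \<le> b'") auto
  ultimately show ?thesis by linarith
qed

lemma copula2_range:
  assumes A: "copula2 A" and "a \<in> {0..1}" "b \<in> {0..1}"
  shows "0 \<le> A a b \<and> A a b \<le> 1"
  using copula2_increasing[OF A, of 0 a 0 b] copula2_lipschitz[OF A, of a b 0 b]
    copula2_boundary[OF A] assms
  by auto

section \<open>Sklar's theorem for continuous margins\<close>

lemma continuous_on_approx_rational:
  fixes f :: "real \<Rightarrow> real"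
  assumes f: "continuous_on {0..1} f" and x0: "x0 \<in> {0..1}" and e: "0 < e"
  obtains x where "x \<in> \<rat> \<inter> {0..1}" "\<bar>f x - f x0\<bar> < e"
proof -
  obtain d where d: "0 < d" "\<And>x. x \<in> {0..1} \<Longrightarrow> dist x x0 < d \<Longrightarrow> dist (f x) (f x0) < e"
    using f x0 e unfolding continuous_on_iff by metis
  have "max 0 (x0 - d) < min 1 (x0 + d)" using d(1) x0 by auto
  then obtain r where r: "r \<in> \<rat>" "max 0 (x0 - d) < r" "r < min 1 (x0 + d)"
    using Rats_dense_in_real by blast
  then have "r \<in> {0..1}" "dist r x0 < d" by (auto simp: dist_real_def)
  then show ?thesis using d(2)[of r] r(1) that by (auto simp: dist_real_def)
qed

locale bivariate_df =
  fixes H :: "real \<Rightarrow> real \<Rightarrow> real"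
  assumes increasing: "\<And>x x' y y'. {x, x', y, y'} \<subseteq> {0..1} \<Longrightarrow> x \<le> x' \<Longrightarrow> y \<le> y'
      \<Longrightarrow> 0 \<le> H x' y' - H x y' - H x' y + H x y"
    and grounded1: "\<And>y. y \<in> {0..1} \<Longrightarrow> H 0 y = 0"
    and grounded2: "\<And>x. x \<in> {0..1} \<Longrightarrow> H x 0 = 0"
    and total: "H 1 1 = 1"
    and continuous_margin1: "continuous_on {0..1} (\<lambda>x. H x 1)"
    and continuous_margin2: "continuous_on {0..1} (\<lambda>y. H 1 y)"
begin

lemma increment1_bounds:
  "{x, x', y} \<subseteq> {0..1} \<Longrightarrow> x \<le> x' \<Longrightarrow> 0 \<le> H x' y - H x y \<and> H x' y - H x y \<le> H x' 1 - H x 1"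
  using increasing[of x x' 0 y] increasing[of x x' y 1] grounded2 by auto

lemma increment2_bounds:
  "{x, y, y'} \<subseteq> {0..1} \<Longrightarrow> y \<le> y' \<Longrightarrow> 0 \<le> H x y' - H x y \<and> H x y' - H x y \<le> H 1 y' - H 1 y"
  using increasing[of 0 x y y'] increasing[of x 1 y y'] grounded1 by auto

lemma abs_diff_le_margin1: "{x, x', y} \<subseteq> {0..1} \<Longrightarrow> \<bar>H x y - H x' y\<bar> \<le> \<bar>H x 1 - H x' 1\<bar>"
  using increment1_bounds[of x x' y] increment1_bounds[of x' x y] by (cases "x \<le> x'") auto

lemma abs_diff_le_margin2: "{x, y, y'} \<subseteq> {0..1} \<Longrightarrow> \<bar>H x y - H x y'\<bar> \<le> \<bar>H 1 y - H 1 y'\<bar>"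
  using increment2_bounds[of x y y'] increment2_bounds[of x y' y] by (cases "y \<le> y'") auto

lemma margin1_mono: "{x, x'} \<subseteq> {0..1} \<Longrightarrow> x \<le> x' \<Longrightarrow> H x 1 \<le> H x' 1"
  using increment1_bounds[of x x' 1] by auto

lemma margin2_mono: "{y, y'} \<subseteq> {0..1} \<Longrightarrow> y \<le> y' \<Longrightarrow> H 1 y \<le> H 1 y'"
  using increment2_bounds[of 1 y y'] by auto

lemma margin1_range: "x \<in> {0..1} \<Longrightarrow> H x 1 \<in> {0..1}"
  using margin1_mono[of 0 x] margin1_mono[of x 1] grounded1 total by auto

lemma margin2_range: "y \<in> {0..1} \<Longrightarrow> H 1 y \<in> {0..1}"
  using margin2_mono[of 0 y] margin2_mono[of y 1] grounded2 total by auto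

lemma margin1_surj: "s \<in> {0..1} \<Longrightarrow> \<exists>x\<in>{0..1}. H x 1 = s"
  using IVT'[of "\<lambda>x. H x 1" 0 s 1] continuous_margin1 grounded1 total by auto

lemma margin2_surj: "s \<in> {0..1} \<Longrightarrow> \<exists>y\<in>{0..1}. H 1 y = s"
  using IVT'[of "\<lambda>y. H 1 y" 0 s 1] continuous_margin2 grounded2 total by auto

definition quantile1 :: "real \<Rightarrow> real" where
  "quantile1 s = (SOME x. x \<in> {0..1} \<and> H x 1 = s)"

definition quantile2 :: "real \<Rightarrow> real" where
  "quantile2 s = (SOME y. y \<in> {0..1} \<and> H 1 y = s)"

lemma quantile1: "s \<in> {0..1} \<Longrightarrow> quantile1 s \<in> {0..1} \<and> H (quantile1 s) 1 = s"
  unfolding quantile1_def using someI_ex[OF margin1_surj[unfolded Bex_def]] by blast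

lemma quantile2: "s \<in> {0..1} \<Longrightarrow> quantile2 s \<in> {0..1} \<and> H 1 (quantile2 s) = s"
  unfolding quantile2_def using someI_ex[OF margin2_surj[unfolded Bex_def]] by blast

text \<open>H x y depends on x and y only through the margins, by the increment bounds, so the
  choice of right inverses of the margins does not matter.\<close>
definition sklar_copula :: "real \<Rightarrow> real \<Rightarrow> real" where
  "sklar_copula s1 s2 = H (quantile1 s1) (quantile2 s2)"

lemma sklar_representation:
  assumes "x \<in> {0..1}" "y \<in> {0..1}"
  shows "H x y = sklar_copula (H x 1) (H 1 y)"
proof -
  let ?x = "quantile1 (H x 1)" and ?y = "quantile2 (H 1 y)"
  have x: "?x \<in> {0..1}" "H ?x 1 = H x 1" using quantile1[OF margin1_range] assms by auto
  have y: "?y \<in> {0..1}" "H 1 ?y = H 1 y" using quantile2[OF margin2_range] assms by auto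
  have "H x y = H ?x y" using abs_diff_le_margin1[of x ?x y] x assms by simp
  also have "\<dots> = H ?x ?y" using abs_diff_le_margin2[of ?x y ?y] x y assms by simp
  finally show ?thesis by (simp add: sklar_copula_def)
qed

lemma quantile1_mono:
  assumes "{s, s'} \<subseteq> {0..1}" "s < s'" shows "quantile1 s \<le> quantile1 s'"
  using margin1_mono[of "quantile1 s'" "quantile1 s"] quantile1[of s] quantile1[of s'] assms
  by force

lemma quantile2_mono:
  assumes "{s, s'} \<subseteq> {0..1}" "s < s'" shows "quantile2 s \<le> quantile2 s'"
  using margin2_mono[of "quantile2 s'" "quantile2 s"] quantile2[of s] quantile2[of s'] assms
  by force

lemma copula2_sklar_copula: "copula2 sklar_copula"
  unfolding copula2_def
proof (intro conjI ballI impI)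
  fix u :: real assume u: "u \<in> {0..1}"
  obtain x y where x: "x \<in> {0..1}" "H x 1 = u" and y: "y \<in> {0..1}" "H 1 y = u"
    using margin1_surj[OF u] margin2_surj[OF u] by blast
  show "sklar_copula u 0 = 0" "sklar_copula 0 u = 0" "sklar_copula u 1 = u" "sklar_copula 1 u = u"
    using sklar_representation[of x 0] sklar_representation[of 0 y] sklar_representation[of x 1]
      sklar_representation[of 1 y] grounded1 grounded2 total x y by auto
next
  fix u1 u2 v1 v2 :: real
  assume r: "u1 \<in> {0..1}" "u2 \<in> {0..1}" "v1 \<in> {0..1}" "v2 \<in> {0..1}" "u1 \<le> u2" "v1 \<le> v2"
  show "0 \<le> sklar_copula u2 v2 - sklar_copula u1 v2 - sklar_copula u2 v1 + sklar_copula u1 v1"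
  proof (cases "u1 = u2 \<or> v1 = v2")
    case False
    then have "quantile1 u1 \<le> quantile1 u2" "quantile2 v1 \<le> quantile2 v2"
      using quantile1_mono[of u1 u2] quantile2_mono[of v1 v2] r by auto
    then show ?thesis
      unfolding sklar_copula_def
      using increasing[of "quantile1 u1" "quantile1 u2" "quantile2 v1" "quantile2 v2"]
        quantile1[of u1] quantile1[of u2] quantile2[of v1] quantile2[of v2] r by simp
  qed auto
qed

lemma sklar: "\<exists>A. copula2 A \<and> (\<forall>x\<in>{0..1}. \<forall>y\<in>{0..1}. H x y = A (H x 1) (H 1 y))"
  using copula2_sklar_copula sklar_representation by blast

text \<open>This makes the copula measurable when H depends measurably on a parameter.\<close>
lemma copula_eq_INF_rational:
  assumes B: "copula2 B" and rep: "\<forall>x\<in>{0..1}. \<forall>y\<in>{0..1}. H x y = B (H x 1) (H 1 y)"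
    and s: "s1 \<in> {0..1}" "s2 \<in> {0..1}"
  shows "B s1 s2 = (INF (x, y)\<in>(\<rat> \<inter> {0..1}) \<times> (\<rat> \<inter> {0..1}). H x y + \<bar>H x 1 - s1\<bar> + \<bar>H 1 y - s2\<bar>)"
proof -
  define Q :: "(real \<times> real) set" where "Q = (\<rat> \<inter> {0..1}) \<times> (\<rat> \<inter> {0..1})"
  define T where "T = (\<lambda>(x, y). H x y + \<bar>H x 1 - s1\<bar> + \<bar>H 1 y - s2\<bar>)"
  have approx: "\<bar>H x y - B s1 s2\<bar> \<le> \<bar>H x 1 - s1\<bar> + \<bar>H 1 y - s2\<bar>"
    if "x \<in> {0..1}" "y \<in> {0..1}" for x y
    unfolding rep[rule_format, OF that]
    using copula2_lipschitz[OF B] margin1_range[OF that(1)] margin2_range[OF that(2)] s by simp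
  have lower: "B s1 s2 \<le> T p" if "p \<in> Q" for p
    using approx[of "fst p" "snd p"] that unfolding Q_def T_def
    by (auto simp: abs_le_iff split: prod.splits)
  have "B s1 s2 = (INF p\<in>Q. T p)"
  proof (rule antisym)
    have "(0, 0) \<in> Q" by (simp add: Q_def)
    then show "B s1 s2 \<le> (INF p\<in>Q. T p)"
      using lower by (intro cINF_greatest) auto
  next
    have bdd: "bdd_below (T ` Q)"
      using lower by (intro bdd_belowI2[where m = "B s1 s2"])
    show "(INF p\<in>Q. T p) \<le> B s1 s2"
    proof (rule field_le_epsilon)
      fix e :: real assume e: "0 < e"
      obtain x0 y0 where x0: "x0 \<in> {0..1}" "H x0 1 = s1" and y0: "y0 \<in> {0..1}" "H 1 y0 = s2"
        using margin1_surj[OF s(1)] margin2_surj[OF s(2)] by blast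
      obtain x where x: "x \<in> \<rat> \<inter> {0..1}" "\<bar>H x 1 - s1\<bar> < e / 4"
        using continuous_on_approx_rational[OF continuous_margin1 x0(1), of "e / 4"] x0(2) e by auto
      obtain y where y: "y \<in> \<rat> \<inter> {0..1}" "\<bar>H 1 y - s2\<bar> < e / 4"
        using continuous_on_approx_rational[OF continuous_margin2 y0(1), of "e / 4"] y0(2) e by auto
      have "(INF p\<in>Q. T p) \<le> T (x, y)"
        using cINF_lower[OF bdd, of "(x, y)"] x y by (simp add: Q_def)
      also have "\<dots> \<le> B s1 s2 + e"
        using approx[of x y] x y by (auto simp: T_def abs_le_iff)
      finally show "(INF p\<in>Q. T p) \<le> B s1 s2 + e" .
    qed
  qed
  then show ?thesis unfolding Q_def T_def .
qed

end

section \<open>The partial copula is a copula\<close>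

lemma box_borel [measurable]: "{0..x::real} \<times> {0..y::real} \<in> sets borel"
  by (intro borel_closed closed_Times) auto

lemma measure_box_increasing:
  fixes M :: "(real \<times> real) measure"
  assumes "finite_measure M" and sets_M: "sets M = sets borel"
    and "0 \<le> x" "x \<le> x'" "0 \<le> y" "y \<le> y'"
  shows "0 \<le> measure M ({0..x'} \<times> {0..y'}) - measure M ({0..x} \<times> {0..y'})
              - measure M ({0..x'} \<times> {0..y}) + measure M ({0..x} \<times> {0..y})"
proof -
  interpret finite_measure M by fact
  define D where "D = {0..x'} - {0..x}"
  have strip: "measure M ({0..x'} \<times> {0..b}) - measure M ({0..x} \<times> {0..b}) = measure M (D \<times> {0..b})"
    for b :: real
  proof -
    have "{0..x'} \<times> {0..b} - {0..x} \<times> {0..b} = D \<times> {0..b}" unfolding D_def by auto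
    moreover have "{0..x} \<times> {0..b} \<subseteq> {0..x'} \<times> {0..b}" using assms by auto
    ultimately show ?thesis using finite_measure_Diff[of "{0..x'} \<times> {0..b}" "{0..x} \<times> {0..b}"] sets_M
      by simp
  qed
  have "D \<times> B \<in> sets M" if "B \<in> sets borel" for B :: "real set"
    using that unfolding sets_M D_def borel_prod[symmetric] by (intro pair_measureI) auto
  then have "measure M (D \<times> {0..y}) \<le> measure M (D \<times> {0..y'})"
    using assms by (intro finite_measure_mono) auto
  then show ?thesis using strip[of y] strip[of y'] by linarith
qed

definition kernel_cdf :: "(real \<Rightarrow> (real \<times> real) measure) \<Rightarrow> real \<Rightarrow> real \<Rightarrow> real \<Rightarrow> real" where
  "kernel_cdf K t x y = measure (K t) ({0..x} \<times> {0..y})"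

text \<open>Fibres on which Sklar's theorem applies: besides continuity, the conditional margins
  must have no atom at 0, which holds almost surely because C is grounded.\<close>
definition sklar_regular :: "(real \<Rightarrow> (real \<times> real) measure) \<Rightarrow> real \<Rightarrow> bool" where
  "sklar_regular K t \<longleftrightarrow> t \<in> {0..1} \<and> continuous_on {0..1} (F13 K t) \<and> continuous_on {0..1} (F23 K t)
     \<and> F13 K t 0 = 0 \<and> F23 K t 0 = 0"

lemma lebesgue_integral_indicator_const:
  "integral\<^sup>L lebesgue (\<lambda>t. indicator {0..v} t * (u::real)) = (if 0 \<le> v then v * u else 0)"
  by (subst integral_completion) auto

context
  fixes C :: "real \<Rightarrow> real \<Rightarrow> real \<Rightarrow> real" and K :: "real \<Rightarrow> (real \<times> real) measure"
  assumes C: "copula3 C" and K: "cond_kernel C K" and cont: "cont_margins K"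
begin

lemma kernel_measurable: "K \<in> measurable (restrict_space borel {0..1}) (subprob_algebra borel)"
  and kernel_prob_space: "t \<in> {0..1} \<Longrightarrow> prob_space (K t)"
  and kernel_unit_square: "t \<in> {0..1} \<Longrightarrow> emeasure (K t) ({0..1} \<times> {0..1}) = 1"
  and kernel_represents: "{u1, u2, v} \<subseteq> {0..1} \<Longrightarrow>
     C u1 u2 v = (LINT t:{0..v}|lborel. kernel_cdf K t u1 u2)"
  using K unfolding cond_kernel_def kernel_cdf_def by auto

lemma sets_kernel: "t \<in> {0..1} \<Longrightarrow> sets (K t) = sets borel"
  using measurable_space[OF kernel_measurable, of t] by (simp add: space_subprob_algebra)

lemma kernel_measure_le_1: "t \<in> {0..1} \<Longrightarrow> 0 \<le> measure (K t) S \<and> measure (K t) S \<le> 1"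
  using prob_space.prob_le_1[OF kernel_prob_space] by auto

lemma measurable_kernel_measure:
  "S \<in> sets borel \<Longrightarrow> (\<lambda>t. measure (K t) S) \<in> borel_measurable (restrict_space borel {0..1})"
  unfolding measure_def
  by (intro borel_measurable_enn2real
      measurable_compose[OF kernel_measurable measurable_emeasure_subprob_algebra])

lemma measurable_indicator_times_kernel_measure:
  "S \<in> sets borel \<Longrightarrow> (\<lambda>t. indicator {0..1} t * measure (K t) S) \<in> borel_measurable borel"
  using borel_measurable_restrict_space_iff[of "{0..1::real}" borel "\<lambda>t. measure (K t) S"]
    measurable_kernel_measure by simp

lemma AE_kernel_null:
  assumes S: "S \<in> sets borel" and null: "(LINT t:{0..1}|lborel. measure (K t) S) = 0"
  shows "AE t in lborel. t \<in> {0..1} \<longrightarrow> measure (K t) S = 0"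
proof -
  have int: "integrable lborel (\<lambda>t. indicator {0..1} t * measure (K t) S)"
    using measurable_indicator_times_kernel_measure[OF S] kernel_measure_le_1
    by (intro integrableI_bounded_set[where A="{0..1}" and B=1])
      (auto simp: indicator_def emeasure_lborel_Icc_eq)
  have "integral\<^sup>L lborel (\<lambda>t. indicator {0..1} t * measure (K t) S) = 0"
    using null by (simp add: set_lebesgue_integral_def)
  then have "AE t in lborel. indicator {0..1} t * measure (K t) S = 0"
    using integral_nonneg_eq_0_iff_AE[OF int] kernel_measure_le_1 by (auto simp: indicator_def)
  then show ?thesis by eventually_elim (auto simp: indicator_def)
qed

lemma AE_sklar_regular: "AE t in lebesgue. t \<in> {0..1} \<longrightarrow> sklar_regular K t"
proof (rule AE_completion)
  have "AE t in lborel. t \<in> {0..1} \<longrightarrow> F13 K t 0 = 0"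
    unfolding F13_def using kernel_represents[of 0 1 1] copula3_grounded[OF C, of 1 1] box_borel[of 0 1]
    by (intro AE_kernel_null) (auto simp: kernel_cdf_def)
  moreover have "AE t in lborel. t \<in> {0..1} \<longrightarrow> F23 K t 0 = 0"
    unfolding F23_def using kernel_represents[of 1 0 1] copula3_grounded[OF C, of 1 1] box_borel[of 1 0]
    by (intro AE_kernel_null) (auto simp: kernel_cdf_def)
  ultimately show "AE t in lborel. t \<in> {0..1} \<longrightarrow> sklar_regular K t"
    using cont unfolding cont_margins_def sklar_regular_def by eventually_elim auto
qed

lemma bivariate_df_kernel_cdf:
  assumes reg: "sklar_regular K t"
  shows "bivariate_df (kernel_cdf K t)"
proof -
  have t: "t \<in> {0..1}" using reg by (simp add: sklar_regular_def)
  interpret finite_measure "K t" using kernel_prob_space[OF t] by (simp add: prob_space_def)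
  have mono: "kernel_cdf K t x y \<le> kernel_cdf K t x' y'" if "x \<le> x'" "y \<le> y'" for x y x' y'
    unfolding kernel_cdf_def using that sets_kernel[OF t] by (intro finite_measure_mono) auto
  have zero: "kernel_cdf K t 0 1 = 0" "kernel_cdf K t 1 0 = 0"
    using reg by (simp_all add: sklar_regular_def F13_def F23_def kernel_cdf_def)
  have nonneg: "0 \<le> kernel_cdf K t x y" for x y by (simp add: kernel_cdf_def)
  show ?thesis
  proof
    fix x x' y y' :: real assume "{x, x', y, y'} \<subseteq> {0..1}" "x \<le> x'" "y \<le> y'"
    then show "0 \<le> kernel_cdf K t x' y' - kernel_cdf K t x y'
        - kernel_cdf K t x' y + kernel_cdf K t x y"
      unfolding kernel_cdf_def using sets_kernel[OF t]
      by (intro measure_box_increasing finite_measure_axioms) auto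
  next
    fix y :: real assume "y \<in> {0..1}"
    then show "kernel_cdf K t 0 y = 0" using mono[of 0 0 y 1] zero nonneg[of 0 y] by auto
  next
    fix x :: real assume "x \<in> {0..1}"
    then show "kernel_cdf K t x 0 = 0" using mono[of x 1 0 0] zero nonneg[of x 0] by auto
  next
    show "kernel_cdf K t 1 1 = 1" using kernel_unit_square[OF t]
        by (simp add: kernel_cdf_def measure_def)
    show "continuous_on {0..1} (\<lambda>x. kernel_cdf K t x 1)" "continuous_on {0..1} (\<lambda>y. kernel_cdf K t 1 y)"
      using reg by (simp_all add: sklar_regular_def F13_def F23_def kernel_cdf_def)
  qed
qed

lemma cond_copula_sklar:
  assumes "sklar_regular K t"
  shows "copula2 (cond_copula K t)"
    and "\<forall>x\<in>{0..1}. \<forall>y\<in>{0..1}.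
      kernel_cdf K t x y = cond_copula K t (kernel_cdf K t x 1) (kernel_cdf K t 1 y)"
proof -
  interpret bivariate_df "kernel_cdf K t" using bivariate_df_kernel_cdf[OF assms] .
  have "\<exists>A. copula2 A \<and> (\<forall>u1\<in>{0..1}. \<forall>u2\<in>{0..1}.
      measure (K t) ({0..u1} \<times> {0..u2}) = A (F13 K t u1) (F23 K t u2))"
    using sklar unfolding kernel_cdf_def F13_def F23_def .
  from someI_ex[OF this] show "copula2 (cond_copula K t)"
    and "\<forall>x\<in>{0..1}. \<forall>y\<in>{0..1}.
      kernel_cdf K t x y = cond_copula K t (kernel_cdf K t x 1) (kernel_cdf K t 1 y)"
    unfolding cond_copula_def kernel_cdf_def F13_def F23_def by blast+
qed

lemma cond_copula_measurable:
  assumes s: "s1 \<in> {0..1}" "s2 \<in> {0..1}"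
  shows "(\<lambda>t. indicator {0..1} t * cond_copula K t s1 s2) \<in> borel_measurable lebesgue"
proof (rule borel_measurable_AE)
  define Q :: "(real \<times> real) set" where "Q = (\<rat> \<inter> {0..1}) \<times> (\<rat> \<inter> {0..1})"
  define g where "g t = (INF (x, y)\<in>Q.
    kernel_cdf K t x y + \<bar>kernel_cdf K t x 1 - s1\<bar> + \<bar>kernel_cdf K t 1 y - s2\<bar>)" for t
  have "g \<in> borel_measurable (restrict_space borel {0..1})"
    unfolding g_def
  proof (rule borel_measurable_cINF_real)
    show "countable Q" unfolding Q_def by (intro countable_SIGMA countable_Int1 countable_rat)
    fix p :: "real \<times> real"
    show "(\<lambda>t. case p of (x, y) \<Rightarrow>
          kernel_cdf K t x y + \<bar>kernel_cdf K t x 1 - s1\<bar> + \<bar>kernel_cdf K t 1 y - s2\<bar>)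
        \<in> borel_measurable (restrict_space borel {0..1})"
      unfolding kernel_cdf_def
      by (cases p)
        (simp add: borel_measurable_add borel_measurable_abs borel_measurable_diff measurable_kernel_measure)
  qed
  then show "(\<lambda>t. indicator {0..1} t * g t) \<in> borel_measurable lebesgue"
    using borel_measurable_restrict_space_iff[of "{0..1::real}" borel g]
    by (intro measurable_completion) simp
  show "AE t in lebesgue. indicator {0..1} t * g t = indicator {0..1} t * cond_copula K t s1 s2"
    using AE_sklar_regular
  proof eventually_elim
    case (elim t)
    show ?case
    proof (cases "t \<in> {0..1}")
      case True
      then interpret bivariate_df "kernel_cdf K t" using bivariate_df_kernel_cdf elim by blast
      show ?thesis
        using copula_eq_INF_rational[OF cond_copula_sklar[OF elim[rule_format, OF True]] s] True
        by (simp add: g_def Q_def)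
    qed simp
  qed
qed

lemma cond_copula_integrable:
  assumes s: "s1 \<in> {0..1}" "s2 \<in> {0..1}"
  shows "integrable lebesgue (\<lambda>t. indicator {0..1} t * cond_copula K t s1 s2)"
proof (rule integrableI_bounded_set[where A="{0..1}" and B=1])
  show "AE t in lebesgue. t \<in> {0..1} \<longrightarrow> norm (indicator {0..1} t * cond_copula K t s1 s2) \<le> 1"
    using AE_sklar_regular
    by eventually_elim (use copula2_range[OF cond_copula_sklar(1)] s in \<open>auto simp: abs_le_iff\<close>)
qed (auto simp: emeasure_lborel_Icc_eq cond_copula_measurable[OF s])

lemma partial_copula_eq_integral:
  "partial_copula K s1 s2 = integral\<^sup>L lebesgue (\<lambda>t. indicator {0..1} t * cond_copula K t s1 s2)"
  unfolding partial_copula_def set_lebesgue_integral_def by simp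

lemma partial_copula_eq_const:
  assumes s: "s1 \<in> {0..1}" "s2 \<in> {0..1}"
    and const: "\<And>t. sklar_regular K t \<Longrightarrow> cond_copula K t s1 s2 = u"
  shows "partial_copula K s1 s2 = u"
proof -
  have "partial_copula K s1 s2 = integral\<^sup>L lebesgue (\<lambda>t::real. indicator {0..1} t * u)"
    unfolding partial_copula_eq_integral
  proof (rule integral_cong_AE)
    show "(\<lambda>t::real. indicator {0..1} t * u) \<in> borel_measurable lebesgue"
      by (rule measurable_completion) simp
    show "AE t in lebesgue. indicator {0..1} t * cond_copula K t s1 s2 = indicator {0..1} t * u"
      using AE_sklar_regular by eventually_elim (auto simp: indicator_def const)
  qed (rule cond_copula_measurable[OF s])
  then show ?thesis by (simp add: lebesgue_integral_indicator_const)
qed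

lemma copula2_partial_copula: "copula2 (partial_copula K)"
  unfolding copula2_def
proof (intro conjI ballI impI)
  fix u :: real assume u: "u \<in> {0..1}"
  note boundary = copula2_boundary[OF cond_copula_sklar(1) u]
  show "partial_copula K u 0 = 0" "partial_copula K 0 u = 0"
    "partial_copula K u 1 = u" "partial_copula K 1 u = u"
    using u by (auto intro!: partial_copula_eq_const simp: boundary)
next
  fix u1 u2 v1 v2 :: real
  assume r: "u1 \<in> {0..1}" "u2 \<in> {0..1}" "v1 \<in> {0..1}" "v2 \<in> {0..1}" "u1 \<le> u2" "v1 \<le> v2"
  let ?c = "\<lambda>s1 s2 t. indicator {0..1} t * cond_copula K t s1 s2"
  have "partial_copula K u2 v2 - partial_copula K u1 v2 - partial_copula K u2 v1 + partial_copula K u1 v1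
     = integral\<^sup>L lebesgue (\<lambda>t. ?c u2 v2 t - ?c u1 v2 t - ?c u2 v1 t + ?c u1 v1 t)"
    unfolding partial_copula_eq_integral using r by (simp add: cond_copula_integrable)
  also have "\<dots> \<ge> 0"
    using AE_sklar_regular
  proof (intro integral_nonneg_AE, eventually_elim)
    case (elim t)
    then show ?case
      using copula2_increasing[OF cond_copula_sklar(1), of t u1 u2 v1 v2] r
      by (cases "t \<in> {0..1}") (auto simp: algebra_simps)
  qed
  finally show "0 \<le> partial_copula K u2 v2 - partial_copula K u1 v2
    - partial_copula K u2 v1 + partial_copula K u1 v1" .
qed

lemma pvc_abs_le_1:
  assumes "{u1, u2, v} \<subseteq> {0..1}"
  shows "\<bar>pvc K u1 u2 v\<bar> \<le> 1"
proof -
  define f where "f t = indicator {0..v} t * partial_copula K (F13 K t u1) (F23 K t u2)" for t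
  have f_le: "\<bar>f t\<bar> \<le> indicator {0..v} t" for t
  proof (cases "t \<in> {0..v}")
    case True
    then have "F13 K t u1 \<in> {0..1}" "F23 K t u2 \<in> {0..1}"
      using kernel_measure_le_1[of t] assms by (auto simp: F13_def F23_def)
    then show ?thesis using copula2_range[OF copula2_partial_copula] True by (auto simp: f_def)
  qed (simp add: f_def)
  have int: "integrable lebesgue (indicator {0..v} :: real \<Rightarrow> real)"
    by (subst integrable_completion) (auto simp: emeasure_lborel_Icc_eq)
  have "integral\<^sup>L lebesgue f \<le> integral\<^sup>L lebesgue (indicator {0..v} :: real \<Rightarrow> real)"
    using f_le by (intro integral_mono'[OF int]) (auto simp: abs_le_iff)
  moreover have
    "integral\<^sup>L lebesgue (\<lambda>t. - f t) \<le> integral\<^sup>L lebesgue (indicator {0..v} :: real \<Rightarrow> real)"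
    using f_le by (intro integral_mono'[OF int]) (auto simp: abs_le_iff)
  moreover have "integral\<^sup>L lebesgue (indicator {0..v} :: real \<Rightarrow> real) = v"
    using assms lebesgue_integral_indicator_const[of v 1] by simp
  moreover have "pvc K u1 u2 v = integral\<^sup>L lebesgue f"
    unfolding pvc_def f_def set_lebesgue_integral_def by simp
  ultimately show ?thesis using assms by (simp add: abs_le_iff)
qed

lemma simplified_if_eq_pvc:
  assumes "\<forall>u1\<in>{0..1}. \<forall>u2\<in>{0..1}. \<forall>v\<in>{0..1}. C u1 u2 v = pvc K u1 u2 v"
  shows "simplified C"
  unfolding simplified_def
  using C K cont copula2_partial_copula assms unfolding pvc_def by blast

end

section \<open>A simplified copula matching C on a grid\<close>

lemma sum_vol3_telescope1:
  "(\<Sum>i<a. vol3 C (real i / n) (real (Suc i) / n) a2 b2 a3 b3) = vol3 C 0 (real a / n) a2 b2 a3 b3"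
  by (induct a) (auto simp: vol3_def algebra_simps)

lemma sum_vol3_telescope2:
  "(\<Sum>j<b. vol3 C a1 b1 (real j / n) (real (Suc j) / n) a3 b3) = vol3 C a1 b1 0 (real b / n) a3 b3"
  by (induct b) (auto simp: vol3_def algebra_simps)

lemma sum_vol3_telescope3:
  "(\<Sum>k<d. vol3 C a1 b1 a2 b2 (real k / n) (real (Suc k) / n)) = vol3 C a1 b1 a2 b2 0 (real d / n)"
  by (induct d) (auto simp: vol3_def algebra_simps)

lemma grid_point_in_unit: "i \<le> n \<Longrightarrow> real i / real n \<in> {0..1}"
  by (cases "n = 0") (auto simp: field_simps)

lemma floor_grid_bounds:
  assumes "0 \<le> x" "0 < n"
  shows "real (nat \<lfloor>x * real n\<rfloor>) / real n \<le> x" "x < real (Suc (nat \<lfloor>x * real n\<rfloor>)) / real n"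
  using assms by (simp_all add: field_simps of_nat_nat) linarith

lemma div_mod_less_square:
  fixes p n :: nat
  assumes "p < n * n" shows "p div n < n" "p mod n < n"
  using assms
  by (auto simp: less_mult_imp_div_less) (metis mod_less_divisor gr_zeroI mult_0_right not_less0)

lemma sum_div_mod_square:
  fixes f :: "nat \<Rightarrow> nat \<Rightarrow> real"
  shows "(\<Sum>p<n * n. f (p div n) (p mod n)) = (\<Sum>i<n. \<Sum>j<n. f i j)"
proof -
  have "(\<Sum>p<n * n. f (p div n) (p mod n)) = (\<Sum>(i, j)\<in>{..<n} \<times> {..<n}. f i j)"
  proof (rule sum.reindex_bij_witness[where i="\<lambda>(i, j). i * n + j" and j="\<lambda>p. (p div n, p mod n)"])
    fix a assume "a \<in> {..<n} \<times> {..<n}"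
    then obtain i j where ij: "a = (i, j)" "i < n" "j < n" by auto
    then show "((case a of (i, j) \<Rightarrow> i * n + j) div n, (case a of (i, j) \<Rightarrow> i * n + j) mod n) = a"
      by simp
    have "i * n + j < Suc i * n" using ij by simp
    also have "\<dots> \<le> n * n" using ij by (intro mult_right_mono) auto
    finally show "(case a of (i, j) \<Rightarrow> i * n + j) \<in> {..<n * n}" using ij by simp
  qed (auto simp: div_mod_less_square)
  also have "\<dots> = (\<Sum>i<n. \<Sum>j<n. f i j)" by (simp add: sum.cartesian_product)
  finally show ?thesis .
qed

lemma sequence_crossing:
  fixes f :: "nat \<Rightarrow> real"
  shows "f 0 \<le> x \<Longrightarrow> x < f N \<Longrightarrow> \<exists>p<N. f p \<le> x \<and> x < f (Suc p)"
proof (induct N)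
  case (Suc N)
  then show ?case by (cases "x < f N") (auto intro: less_SucI)
qed simp

lemma of_nat_mult_min: "real n * min p q = min (real n * p) (real n * q)"
  by (simp add: min_mult_distrib_left)

lemma grid_rounding:
  fixes n :: nat
  assumes "x \<in> {0..1}" "0 < n"
  obtains a where "a \<le> n" "\<bar>x - real a / n\<bar> \<le> 1 / n"
proof -
  define a where "a = nat \<lfloor>x * real n\<rfloor>"
  have a: "real a / n \<le> x" "x < real (Suc a) / n"
    using floor_grid_bounds[of x n] assms unfolding a_def by auto
  have "real a \<le> x * real n" using a(1) assms by (simp add: field_simps)
  moreover have "x * real n \<le> real n" using assms by (simp add: mult_left_le_one_le)
  ultimately have "real a \<le> real n" by linarith
  moreover have "\<bar>x - real a / n\<bar> \<le> 1 / n" using a by (simp add: add_divide_distrib)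
  ultimately show ?thesis using that by simp
qed

lemma sum_rotate3: "(\<Sum>k\<in>A. \<Sum>i\<in>B. \<Sum>j\<in>D. F i j k) = (\<Sum>i\<in>B. \<Sum>j\<in>D. \<Sum>k\<in>A. F i j k)"
  by (subst sum.swap) (intro sum.cong refl, rule sum.swap)

lemma sum_lessThan_if_less:
  fixes a n :: nat
  shows "a \<le> n \<Longrightarrow> (\<Sum>i<n. if i < a then f i else 0) = (\<Sum>i<a. f i)"
proof -
  assume "a \<le> n"
  then have "{..<n} \<inter> {..<a} = {..<a}" by auto
  then show ?thesis using sum.inter_restrict[of "{..<n}" f "{..<a}"] by simp
qed

definition cell_mass :: "(real \<Rightarrow> real \<Rightarrow> real \<Rightarrow> real) \<Rightarrow> nat \<Rightarrow> nat \<Rightarrow> nat \<Rightarrow> nat \<Rightarrow> real" where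
  "cell_mass C n i j k = vol3 C (real i / n) (real (Suc i) / n) (real j / n) (real (Suc j) / n)
     (real k / n) (real (Suc k) / n)"

text \<open>The cells (i, j, k) of slab k are enumerated as p = i * n + j; their intervals tile
  [k/n, (k+1)/n) because the slab has total C-mass 1/n.\<close>
definition slab_offset :: "(real \<Rightarrow> real \<Rightarrow> real \<Rightarrow> real) \<Rightarrow> nat \<Rightarrow> nat \<Rightarrow> nat \<Rightarrow> real" where
  "slab_offset C n k p = real k / n + (\<Sum>q<p. cell_mass C n (q div n) (q mod n) k)"

definition cell_interval :: "(real \<Rightarrow> real \<Rightarrow> real \<Rightarrow> real) \<Rightarrow> nat \<Rightarrow> nat \<Rightarrow> nat \<Rightarrow> real set" where
  "cell_interval C n k p = {slab_offset C n k p ..< slab_offset C n k (Suc p)}"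

definition cell_step :: "(real \<Rightarrow> real \<Rightarrow> real \<Rightarrow> real) \<Rightarrow> nat \<Rightarrow> (nat \<Rightarrow> real) \<Rightarrow> real \<Rightarrow> real" where
  "cell_step C n \<phi> t = (\<Sum>k<n. \<Sum>p<n * n. indicator (cell_interval C n k p) t * \<phi> p)"

lemma measurable_cell_step [measurable]: "cell_step C n \<phi> \<in> borel_measurable borel"
  unfolding cell_step_def cell_interval_def by measurable

definition grid_a :: "(real \<Rightarrow> real \<Rightarrow> real \<Rightarrow> real) \<Rightarrow> nat \<Rightarrow> real \<Rightarrow> real" where
  "grid_a C n = cell_step C n (\<lambda>p. real (p div n) / n)"

definition grid_b :: "(real \<Rightarrow> real \<Rightarrow> real \<Rightarrow> real) \<Rightarrow> nat \<Rightarrow> real \<Rightarrow> real" where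
  "grid_b C n = cell_step C n (\<lambda>p. real (p mod n) / n)"

lemma measurable_grid_a [measurable]: "grid_a C n \<in> borel_measurable borel"
  and measurable_grid_b [measurable]: "grid_b C n \<in> borel_measurable borel"
  unfolding grid_a_def grid_b_def by measurable

context
  fixes C :: "real \<Rightarrow> real \<Rightarrow> real \<Rightarrow> real" and n :: nat
  assumes C: "copula3 C" and n: "0 < n"
begin

lemma cell_mass_nonneg: "i < n \<Longrightarrow> j < n \<Longrightarrow> k < n \<Longrightarrow> 0 \<le> cell_mass C n i j k"
  unfolding cell_mass_def
  by (intro copula3_vol3_nonneg[OF C]) (auto intro!: grid_point_in_unit divide_right_mono)

lemma sum_cell_mass_box:
  assumes "a \<le> n" "b \<le> n" "d \<le> n"
  shows "(\<Sum>i<a. \<Sum>j<b. \<Sum>k<d. cell_mass C n i j k) = C (real a / n) (real b / n) (real d / n)"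
  using assms grid_point_in_unit[of a n] grid_point_in_unit[of b n] grid_point_in_unit[of d n]
  unfolding cell_mass_def sum_vol3_telescope1 sum_vol3_telescope2 sum_vol3_telescope3
  by (simp add: vol3_def copula3_grounded[OF C])

lemma sum_cell_mass_slab1: "i < n \<Longrightarrow> (\<Sum>j<n. \<Sum>k<n. cell_mass C n i j k) = 1 / n"
  using n grid_point_in_unit[of i n] grid_point_in_unit[of "Suc i" n]
  unfolding cell_mass_def sum_vol3_telescope2 sum_vol3_telescope3
  by (simp add: vol3_def copula3_grounded[OF C] copula3_margins[OF C] diff_divide_distrib[symmetric])

lemma sum_cell_mass_slab2: "j < n \<Longrightarrow> (\<Sum>i<n. \<Sum>k<n. cell_mass C n i j k) = 1 / n"
  using n grid_point_in_unit[of j n] grid_point_in_unit[of "Suc j" n]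
  unfolding cell_mass_def sum_vol3_telescope1 sum_vol3_telescope3
  by (simp add: vol3_def copula3_grounded[OF C] copula3_margins[OF C] diff_divide_distrib[symmetric])

lemma sum_cell_mass_slab3: "k < n \<Longrightarrow> (\<Sum>i<n. \<Sum>j<n. cell_mass C n i j k) = 1 / n"
  using n grid_point_in_unit[of k n] grid_point_in_unit[of "Suc k" n]
  unfolding cell_mass_def sum_vol3_telescope1 sum_vol3_telescope2
  by (simp add: vol3_def copula3_grounded[OF C] copula3_margins[OF C] diff_divide_distrib[symmetric])

lemma slab_offset_mono: "k < n \<Longrightarrow> q \<le> q' \<Longrightarrow> q' \<le> n * n \<Longrightarrow> slab_offset C n k q \<le> slab_offset C n k q'"
  unfolding slab_offset_def
  by (simp, rule sum_mono2) (auto intro!: cell_mass_nonneg simp: div_mod_less_square)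

lemma slab_offset_end: "k < n \<Longrightarrow> slab_offset C n k (n * n) = real (Suc k) / n"
  unfolding slab_offset_def sum_div_mod_square[of "\<lambda>i j. cell_mass C n i j k"]
  by (simp add: sum_cell_mass_slab3 add_divide_distrib)

lemma cell_interval_in_slab:
  assumes "k < n" "p < n * n" "t \<in> cell_interval C n k p"
  shows "real k / n \<le> t \<and> t < real (Suc k) / n"
proof -
  have "slab_offset C n k 0 = real k / n" by (simp add: slab_offset_def)
  then show ?thesis
    using slab_offset_mono[of k 0 p] slab_offset_mono[of k "Suc p" "n * n"]
      slab_offset_end[OF assms(1)] assms
    by (auto simp: cell_interval_def)
qed

lemma measure_cell_interval:
  assumes "k < n" "p < n * n"
  shows "measure lborel (cell_interval C n k p) = cell_mass C n (p div n) (p mod n) k"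
  using slab_offset_mono[of k p "Suc p"] assms by (simp add: cell_interval_def slab_offset_def)

lemma cell_interval_disjoint:
  assumes "k < n" "p < n * n" "k' < n" "p' < n * n" "(k, p) \<noteq> (k', p')"
    and t: "t \<in> cell_interval C n k p"
  shows "t \<notin> cell_interval C n k' p'"
proof
  assume t': "t \<in> cell_interval C n k' p'"
  show False
  proof (cases "k = k'")
    case True
    then have "p \<noteq> p'" using assms(5) by auto
    then consider "Suc p \<le> p'" | "Suc p' \<le> p" by linarith
    then show False
      using slab_offset_mono[of k "Suc p" p'] slab_offset_mono[of k "Suc p'" p] assms t t' True
      by cases (auto simp: cell_interval_def)
  next
    case False
    then consider "Suc k \<le> k'" | "Suc k' \<le> k" by linarith
    then have "real (Suc k) / n \<le> real k' / n \<or> real (Suc k') / n \<le> real k / n"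
      by cases (auto intro!: divide_right_mono)
    then show False
      using cell_interval_in_slab[OF assms(1,2) t] cell_interval_in_slab[OF assms(3,4) t'] by auto
  qed
qed

lemma cell_interval_cover:
  assumes "0 \<le> t" "t < 1"
  obtains k p where "k < n" "p < n * n" "t \<in> cell_interval C n k p"
proof -
  define k where "k = nat \<lfloor>t * real n\<rfloor>"
  have k: "real k / n \<le> t" "t < real (Suc k) / n"
    using floor_grid_bounds[OF assms(1) n] unfolding k_def by auto
  have "real k \<le> t * real n" using k(1) n by (simp add: field_simps)
  moreover have "t * real n < real n" using assms n by simp
  ultimately have "real k < real n" by linarith
  then have "k < n" by simp
  moreover have "slab_offset C n k 0 \<le> t" "t < slab_offset C n k (n * n)"
    using k slab_offset_end[OF \<open>k < n\<close>] by (auto simp: slab_offset_def)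
  ultimately show ?thesis
    using sequence_crossing[of "slab_offset C n k" t "n * n"] that by (auto simp: cell_interval_def)
qed

lemma sum_indicator_cell_interval:
  assumes "k < n" "p < n * n" "t \<in> cell_interval C n k p" "A \<subseteq> {..<n}"
  shows "(\<Sum>k'\<in>A. \<Sum>p'<n * n. indicator (cell_interval C n k' p') t * (g k' p' :: real))
    = (if k \<in> A then g k p else 0)"
proof -
  have ind: "indicator (cell_interval C n k' p') t = (if k' = k \<and> p' = p then 1 else (0::real))"
    if "k' \<in> A" "p' < n * n" for k' p'
    using cell_interval_disjoint[OF assms(1,2) _ that(2), of k' t] assms that
    by (auto simp: indicator_def)
  have "(\<Sum>p'<n * n. indicator (cell_interval C n k' p') t * g k' p') = (if k' = k then g k p else 0)"
    if "k' \<in> A" for k'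
  proof -
    have "(\<Sum>p'<n * n. indicator (cell_interval C n k' p') t * g k' p')
        = (\<Sum>p'<n * n. if k' = k \<and> p' = p then g k' p' else 0)"
      using that by (intro sum.cong) (auto simp: ind)
    then show ?thesis using assms(2) by (cases "k' = k") simp_all
  qed
  then have "(\<Sum>k'\<in>A. \<Sum>p'<n * n. indicator (cell_interval C n k' p') t * g k' p')
      = (\<Sum>k'\<in>A. if k' = k then g k p else 0)"
    by (intro sum.cong) auto
  also have "\<dots> = (if k \<in> A then g k p else 0)"
    using finite_subset[OF assms(4)] by simp
  finally show ?thesis .
qed

lemma cell_step_eq:
  assumes "k < n" "p < n * n" "t \<in> cell_interval C n k p"
  shows "cell_step C n \<phi> t = \<phi> p"
  unfolding cell_step_def by (rule trans[OF sum_indicator_cell_interval]) (use assms in auto)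

lemma cell_step_cases:
  "(\<exists>k<n. \<exists>p<n * n. t \<in> cell_interval C n k p \<and> cell_step C n \<phi> t = \<phi> p) \<or> cell_step C n \<phi> t = 0"
proof (cases "\<exists>k<n. \<exists>p<n * n. t \<in> cell_interval C n k p")
  case True
  then show ?thesis using cell_step_eq by blast
next
  case False
  then show ?thesis by (auto simp: cell_step_def indicator_def intro!: sum.neutral)
qed

lemma cell_step_range:
  assumes "\<And>p. p < n * n \<Longrightarrow> lo \<le> \<phi> p \<and> \<phi> p \<le> hi" "lo \<le> 0" "0 \<le> hi"
  shows "lo \<le> cell_step C n \<phi> t \<and> cell_step C n \<phi> t \<le> hi"
  using cell_step_cases[of t \<phi>] assms by auto

lemma grid_a_range: "0 \<le> grid_a C n t \<and> grid_a C n t \<le> 1 - 1 / n"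
  unfolding grid_a_def
proof (rule cell_step_range)
  fix p assume "p < n * n"
  then have "p div n + 1 \<le> n" using div_mod_less_square by (simp add: Suc_le_eq)
  then have "real (p div n) + 1 \<le> real n" by linarith
  then show "0 \<le> real (p div n) / n \<and> real (p div n) / n \<le> 1 - 1 / n" using n by (simp add: field_simps)
qed (use n in auto)

lemma grid_b_range: "0 \<le> grid_b C n t \<and> grid_b C n t \<le> 1 - 1 / n"
  unfolding grid_b_def
proof (rule cell_step_range)
  fix p assume "p < n * n"
  then have "p mod n + 1 \<le> n" using div_mod_less_square by (simp add: Suc_le_eq)
  then have "real (p mod n) + 1 \<le> real n" by linarith
  then show "0 \<le> real (p mod n) / n \<and> real (p mod n) / n \<le> 1 - 1 / n" using n by (simp add: field_simps)
qed (use n in auto)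

lemma indicator_times_grid_corner:
  fixes \<Phi> :: "real \<Rightarrow> real \<Rightarrow> real"
  assumes d: "d \<le> n"
  shows "indicator {0..real d / n} t * \<Phi> (grid_a C n t) (grid_b C n t)
    = (\<Sum>k<d. \<Sum>p<n * n.
         indicator (cell_interval C n k p) t * \<Phi> (real (p div n) / n) (real (p mod n) / n))
      + indicator {real d / n} t * \<Phi> (grid_a C n (real d / n)) (grid_b C n (real d / n))"
proof (cases "0 \<le> t \<and> t < real d / n")
  case True
  moreover have "real d / n \<le> 1" using d n by simp
  ultimately obtain k p where kp: "k < n" "p < n * n" "t \<in> cell_interval C n k p"
    using cell_interval_cover[of t] by auto
  then have "real k / n < real d / n" using cell_interval_in_slab True by fastforce
  then have "k < d" using n by (simp add: divide_less_cancel)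
  moreover have "indicator {0..real d / n} t = (1::real)" "indicator {real d / n} t = (0::real)"
    using True by auto
  ultimately show ?thesis
    using sum_indicator_cell_interval[OF kp, of "{..<d}" "\<lambda>_ p. \<Phi> (real (p div n) / n) (real (p mod n) / n)"]
      d
    by (simp add: grid_a_def grid_b_def cell_step_eq[OF kp])
next
  case False
  have "t \<notin> cell_interval C n k p" if "k < d" "p < n * n" for k p
  proof
    assume t: "t \<in> cell_interval C n k p"
    have "real (Suc k) / n \<le> real d / n" using that by (intro divide_right_mono) auto
    moreover have "0 \<le> real k / n" by simp
    moreover have "real k / n \<le> t" "t < real (Suc k) / n"
      using cell_interval_in_slab[OF _ that(2) t] that d by auto
    ultimately show False using False by linarith
  qed
  then show ?thesis using False by (auto simp: indicator_def intro!: sum.neutral)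
qed

lemma integral_grid_corner:
  fixes \<Phi> :: "real \<Rightarrow> real \<Rightarrow> real"
  assumes d: "d \<le> n"
  shows "(LINT t:{0..real d / n}|lborel. \<Phi> (grid_a C n t) (grid_b C n t))
       = (\<Sum>k<d. \<Sum>i<n. \<Sum>j<n. cell_mass C n i j k * \<Phi> (real i / n) (real j / n))"
proof -
  let ?c = "\<lambda>p. \<Phi> (real (p div n) / n) (real (p mod n) / n)"
  have int: "integrable lborel (\<lambda>t. indicator (cell_interval C n k p) t * ?c p)"
    if "k < n" "p < n * n" for k p
    using slab_offset_mono[of k p "Suc p"] that
    by (intro integrable_mult_left) (simp add: integrable_indicator_iff cell_interval_def)
  let ?e = "\<Phi> (grid_a C n (real d / n)) (grid_b C n (real d / n))"
  have "(LINT t:{0..real d / n}|lborel. \<Phi> (grid_a C n t) (grid_b C n t))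
      = (LINT t|lborel. (\<Sum>k<d. \<Sum>p<n * n. indicator (cell_interval C n k p) t * ?c p)
          + indicator {real d / n} t * ?e)"
    unfolding set_lebesgue_integral_def real_scaleR_def indicator_times_grid_corner[OF d] ..
  also have "\<dots> = (LINT t|lborel. (\<Sum>k<d. \<Sum>p<n * n. indicator (cell_interval C n k p) t * ?c p))"
  proof -
    have "integrable lborel (\<lambda>t. \<Sum>k<d. \<Sum>p<n * n. indicator (cell_interval C n k p) t * ?c p)"
      using d by (intro Bochner_Integration.integrable_sum int) auto
    moreover have "integrable lborel (\<lambda>t. indicator {real d / n} t * ?e)"
      by (intro integrable_mult_left) simp
    ultimately show ?thesis by (simp add: Bochner_Integration.integral_add)
  qed
  also have "\<dots> = (\<Sum>k<d. LINT t|lborel. (\<Sum>p<n * n. indicator (cell_interval C n k p) t * ?c p))"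
    using d by (intro Bochner_Integration.integral_sum Bochner_Integration.integrable_sum int) auto
  also have "\<dots> = (\<Sum>k<d. \<Sum>p<n * n. LINT t|lborel. indicator (cell_interval C n k p) t * ?c p)"
    using d by (intro sum.cong refl Bochner_Integration.integral_sum int) auto
  also have "\<dots> = (\<Sum>k<d. \<Sum>p<n * n. cell_mass C n (p div n) (p mod n) k * ?c p)"
    using d by (intro sum.cong refl) (simp add: measure_cell_interval)
  also have "\<dots> = (\<Sum>k<d. \<Sum>i<n. \<Sum>j<n. cell_mass C n i j k * \<Phi> (real i / n) (real j / n))"
    by (intro sum.cong refl sum_div_mod_square)
  finally show ?thesis .
qed

end

definition clamp01 :: "real \<Rightarrow> real" where
  "clamp01 x = max 0 (min 1 x)"

lemma clamp01_min: "clamp01 (min p q) = min (clamp01 p) (clamp01 q)"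
  by (simp add: clamp01_def min_def max_def)

lemma clamp01_min_ge_1: "1 \<le> q \<Longrightarrow> clamp01 (min p q) = clamp01 p" "1 \<le> q \<Longrightarrow> clamp01 (min q p) = clamp01 p"
  by (simp_all add: clamp01_def min_def max_def)

lemma sum_clamp01_shifts: "(\<Sum>i<n. clamp01 (y - real i)) = max 0 (min (real n) y)"
  by (induct n) (auto simp: clamp01_def min_def max_def)

text \<open>The distribution function of the uniform distribution on the diagonal segment from
  (a, b) to (a + 1/n, b + 1/n).\<close>
definition diag_cdf :: "nat \<Rightarrow> real \<Rightarrow> real \<Rightarrow> real \<Rightarrow> real \<Rightarrow> real" where
  "diag_cdf n a b u1 u2 = clamp01 (real n * min (u1 - a) (u2 - b))"

lemma diag_cdf_range: "0 \<le> diag_cdf n a b u1 u2 \<and> diag_cdf n a b u1 u2 \<le> 1"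
  by (simp add: diag_cdf_def clamp01_def)

lemma measure_diagonal_segment:
  assumes n: "0 < n" and "0 \<le> a" "0 \<le> b"
  shows "measure (distr (uniform_measure lborel {0..1}) borel (\<lambda>w. (a + w / n, b + w / n)))
      ({0..u1} \<times> {0..u2}) = diag_cdf n a b u1 u2"
proof -
  let ?U = "uniform_measure lborel {0..1::real}" and ?f = "\<lambda>w::real. (a + w / n, b + w / n)"
  define c where "c = real n * min (u1 - a) (u2 - b)"
  have "?f \<in> borel_measurable borel"
    unfolding borel_prod[symmetric] by measurable
  then have f: "?f \<in> measurable ?U borel"
    using measurable_cong_sets[OF sets_uniform_measure refl, of lborel "{0..1}"] by simp
  have S: "{0..u1} \<times> {0..u2} \<in> sets (borel :: (real \<times> real) measure)"
    by (intro borel_closed closed_Times) auto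
  have "w \<le> c \<longleftrightarrow> a + w / n \<le> u1 \<and> b + w / n \<le> u2" for w
    using n unfolding c_def of_nat_mult_min by (auto simp: field_simps)
  then have pre: "{0..1} \<inter> (?f -` ({0..u1} \<times> {0..u2}) \<inter> space ?U) = {0..1} \<inter> {..c}"
    using assms by auto
  have "measure (distr ?U borel ?f) ({0..u1} \<times> {0..u2})
      = measure ?U (?f -` ({0..u1} \<times> {0..u2}) \<inter> space ?U)"
    by (rule measure_distr[OF f S])
  also have "\<dots> = measure lborel ({0..1} \<inter> (?f -` ({0..u1} \<times> {0..u2}) \<inter> space ?U))"
    using measurable_sets[OF f S] by (subst measure_uniform_measure) auto
  also have "\<dots> = measure lborel ({0..1} \<inter> {..c})"
    by (simp only: pre)
  also have "\<dots> = clamp01 c"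
  proof (cases "c < 0")
    case True
    then have "{0..1} \<inter> {..c} = {}" by auto
    then show ?thesis using True by (simp add: clamp01_def)
  next
    case False
    then have "{0..1} \<inter> {..c} = {0..min 1 c}" by auto
    then show ?thesis using False by (simp add: clamp01_def)
  qed
  finally show ?thesis by (simp add: diag_cdf_def c_def)
qed

lemma diag_cdf_grid:
  assumes "0 < n"
  shows "diag_cdf n (real i / n) (real j / n) (real a / n) (real b / n)
    = (if i < a \<and> j < b then 1 else 0)"
proof -
  have "real n * min (real a / n - real i / n) (real b / n - real j / n)
      = min (real a - real i) (real b - real j)"
    using assms unfolding of_nat_mult_min by (simp add: right_diff_distrib)
  then show ?thesis by (auto simp: diag_cdf_def clamp01_def min_def max_def)
qed

context
  fixes n :: nat and a b :: real
  assumes n: "0 < n" and ab: "0 \<le> a" "a \<le> 1 - 1 / n" "0 \<le> b" "b \<le> 1 - 1 / n"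
begin

lemma diag_cdf_eq_min: "diag_cdf n a b u1 u2 = min (diag_cdf n a b u1 1) (diag_cdf n a b 1 u2)"
proof -
  have "1 \<le> real n * (1 - a)" "1 \<le> real n * (1 - b)" using n ab by (auto simp: field_simps)
  then have "diag_cdf n a b u1 1 = clamp01 (real n * (u1 - a))"
    "diag_cdf n a b 1 u2 = clamp01 (real n * (u2 - b))"
    unfolding diag_cdf_def of_nat_mult_min by (simp_all add: clamp01_min_ge_1)
  then show ?thesis unfolding diag_cdf_def of_nat_mult_min clamp01_min by simp
qed

lemma diag_cdf_1_1: "diag_cdf n a b 1 1 = 1"
proof -
  have "1 \<le> real n * (1 - a)" "1 \<le> real n * (1 - b)" using n ab by (auto simp: field_simps)
  then have "1 \<le> real n * min (1 - a) (1 - b)" by (simp add: min_def)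
  then show ?thesis by (simp add: diag_cdf_def clamp01_def)
qed

lemma diag_cdf_0_left: "diag_cdf n a b 0 u = 0"
proof -
  have "real n * min (0 - a) (u - b) \<le> 0" using ab by (intro mult_nonneg_nonpos) (auto simp: min_def)
  then show ?thesis by (simp add: diag_cdf_def clamp01_def)
qed

lemma diag_cdf_0_right: "diag_cdf n a b u 0 = 0"
proof -
  have "real n * min (u - a) (0 - b) \<le> 0" using ab by (intro mult_nonneg_nonpos) (auto simp: min_def)
  then show ?thesis by (simp add: diag_cdf_def clamp01_def)
qed

lemma diag_cdf_increasing:
  assumes "u1 \<le> u1'" "u2 \<le> u2'"
  shows "0 \<le> diag_cdf n a b u1' u2' - diag_cdf n a b u1 u2'
    - diag_cdf n a b u1' u2 + diag_cdf n a b u1 u2"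
proof -
  have "diag_cdf n a b u1 1 \<le> diag_cdf n a b u1' 1"
    using assms unfolding diag_cdf_def clamp01_def by (intro max.mono min.mono mult_left_mono) auto
  moreover have "diag_cdf n a b 1 u2 \<le> diag_cdf n a b 1 u2'"
    using assms unfolding diag_cdf_def clamp01_def by (intro max.mono min.mono mult_left_mono) auto
  ultimately show ?thesis
    unfolding diag_cdf_eq_min[of u1 u2] diag_cdf_eq_min[of u1' u2] diag_cdf_eq_min[of u1 u2']
      diag_cdf_eq_min[of u1' u2'] by (simp add: min_def)
qed

end

definition grid_kernel :: "(real \<Rightarrow> real \<Rightarrow> real \<Rightarrow> real) \<Rightarrow> nat \<Rightarrow> real \<Rightarrow> (real \<times> real) measure" where
  "grid_kernel C n t =
    distr (uniform_measure lborel {0..1}) borel (\<lambda>w. (grid_a C n t + w / n, grid_b C n t + w / n))"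

definition grid_copula :: "(real \<Rightarrow> real \<Rightarrow> real \<Rightarrow> real) \<Rightarrow> nat \<Rightarrow> real \<Rightarrow> real \<Rightarrow> real \<Rightarrow> real" where
  "grid_copula C n u1 u2 v = (LINT t:{0..v}|lborel. measure (grid_kernel C n t) ({0..u1} \<times> {0..u2}))"

lemma measurable_grid_diag_cdf [measurable]:
  "(\<lambda>t. diag_cdf n (grid_a C n t) (grid_b C n t) u1 u2) \<in> borel_measurable borel"
  unfolding diag_cdf_def clamp01_def by measurable

lemma prob_space_uniform_unit: "prob_space (uniform_measure lborel {0..1::real})"
  by (intro prob_space_uniform_measure) auto

lemma prob_space_grid_kernel: "prob_space (grid_kernel C n t)"
  unfolding grid_kernel_def by (intro prob_space.prob_space_distr prob_space_uniform_unit) auto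

lemma measurable_grid_kernel:
  "grid_kernel C n \<in> measurable (restrict_space borel {0..1}) (subprob_algebra borel)"
  unfolding grid_kernel_def
proof (rule measurable_distr2[where M=borel])
  show "(\<lambda>t. uniform_measure lborel {0..1::real})
      \<in> restrict_space borel {0..1} \<rightarrow>\<^sub>M subprob_algebra borel"
    using prob_space_uniform_unit
    by (intro measurable_const) (auto simp: space_subprob_algebra intro: prob_space_imp_subprob_space)
  have "(\<lambda>x. (grid_a C n (fst x) + snd x / n, grid_b C n (fst x) + snd x / n))
      \<in> restrict_space borel {0..1} \<Otimes>\<^sub>M borel \<rightarrow>\<^sub>M borel \<Otimes>\<^sub>M borel"
    by (intro measurable_Pair borel_measurable_add borel_measurable_divide
        measurable_compose[OF measurable_fst measurable_restrict_space1]
        measurable_compose[OF measurable_snd])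
      auto
  then show "(\<lambda>(t, w). (grid_a C n t + w / n, grid_b C n t + w / n))
      \<in> restrict_space borel {0..1} \<Otimes>\<^sub>M borel \<rightarrow>\<^sub>M borel"
    unfolding borel_prod by (simp add: case_prod_beta)
qed

context
  fixes C :: "real \<Rightarrow> real \<Rightarrow> real \<Rightarrow> real" and n :: nat
  assumes C: "copula3 C" and n: "0 < n"
begin

lemma grid_kernel_box:
  "measure (grid_kernel C n t) ({0..u1} \<times> {0..u2}) = diag_cdf n (grid_a C n t) (grid_b C n t) u1 u2"
  unfolding grid_kernel_def using grid_a_range[OF C n] grid_b_range[OF C n]
  by (intro measure_diagonal_segment n) auto

lemma grid_copula_eq:
  "grid_copula C n u1 u2 v = (LINT t:{0..v}|lborel. diag_cdf n (grid_a C n t) (grid_b C n t) u1 u2)"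
  unfolding grid_copula_def grid_kernel_box ..

lemma integral_unit_grid_corner:
  fixes \<Phi> :: "real \<Rightarrow> real \<Rightarrow> real"
  shows   "(LINT t:{0..1}|lborel. \<Phi> (grid_a C n t) (grid_b C n t))
    = (\<Sum>k<n. \<Sum>i<n. \<Sum>j<n. cell_mass C n i j k * \<Phi> (real i / n) (real j / n))"
  using integral_grid_corner[OF C n order_refl, of \<Phi>] n by simp

lemma grid_copula_margin1:
  assumes x: "x \<in> {0..1}" shows "grid_copula C n x 1 1 = x"
proof -
  have corner: "diag_cdf n (real i / n) (real j / n) x 1 = clamp01 (real n * x - real i)"
    if "j < n" for i j
  proof -
    have "1 \<le> real n - real j" using that by linarith
    then show ?thesis using n
      unfolding diag_cdf_def of_nat_mult_min by (simp add: right_diff_distrib clamp01_min_ge_1)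
  qed
  have "grid_copula C n x 1 1 = (\<Sum>k<n. \<Sum>i<n. \<Sum>j<n. cell_mass C n i j k * clamp01 (real n * x - real i))"
    unfolding grid_copula_eq integral_unit_grid_corner[of "\<lambda>a b. diag_cdf n a b x 1"]
    by (simp add: corner)
  also have "\<dots> = (\<Sum>i<n. \<Sum>j<n. \<Sum>k<n. cell_mass C n i j k * clamp01 (real n * x - real i))"
    by (rule sum_rotate3)
  also have "\<dots> = (\<Sum>i<n. (\<Sum>j<n. \<Sum>k<n. cell_mass C n i j k) * clamp01 (real n * x - real i))"
    by (simp add: sum_distrib_right)
  also have "\<dots> = (\<Sum>i<n. clamp01 (real n * x - real i)) / n"
    by (simp add: sum_cell_mass_slab1[OF C n] sum_divide_distrib)
  also have "\<dots> = x" using x n by (simp add: sum_clamp01_shifts min_def max_def)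
  finally show ?thesis .
qed

lemma grid_copula_margin2:
  assumes x: "x \<in> {0..1}" shows "grid_copula C n 1 x 1 = x"
proof -
  have corner: "diag_cdf n (real i / n) (real j / n) 1 x = clamp01 (real n * x - real j)"
    if "i < n" for i j
  proof -
    have "1 \<le> real n - real i" using that by linarith
    then show ?thesis using n
      unfolding diag_cdf_def of_nat_mult_min by (simp add: right_diff_distrib clamp01_min_ge_1)
  qed
  have "grid_copula C n 1 x 1 = (\<Sum>k<n. \<Sum>i<n. \<Sum>j<n. cell_mass C n i j k * clamp01 (real n * x - real j))"
    unfolding grid_copula_eq integral_unit_grid_corner[of "\<lambda>a b. diag_cdf n a b 1 x"]
    by (simp add: corner)
  also have "\<dots> = (\<Sum>i<n. \<Sum>j<n. \<Sum>k<n. cell_mass C n i j k * clamp01 (real n * x - real j))"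
    by (rule sum_rotate3)
  also have "\<dots> = (\<Sum>j<n. \<Sum>i<n. \<Sum>k<n. cell_mass C n i j k * clamp01 (real n * x - real j))"
    by (rule sum.swap)
  also have "\<dots> = (\<Sum>j<n. (\<Sum>i<n. \<Sum>k<n. cell_mass C n i j k) * clamp01 (real n * x - real j))"
    by (simp add: sum_distrib_right)
  also have "\<dots> = (\<Sum>j<n. clamp01 (real n * x - real j)) / n"
    by (simp add: sum_cell_mass_slab2[OF C n] sum_divide_distrib)
  also have "\<dots> = x" using x n by (simp add: sum_clamp01_shifts min_def max_def)
  finally show ?thesis .
qed

lemma grid_copula_margin3:
  assumes x: "x \<in> {0..1}" shows "grid_copula C n 1 1 x = x"
proof -
  have "grid_copula C n 1 1 x = (LINT t:{0..x}|lborel. 1)"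
    unfolding grid_copula_eq using grid_a_range[OF C n] grid_b_range[OF C n] n
    by (simp add: diag_cdf_1_1)
  then show ?thesis using x by (simp add: set_lebesgue_integral_def)
qed

lemma grid_copula_eq_on_grid:
  assumes "a \<le> n" "b \<le> n" "d \<le> n"
  shows "grid_copula C n (real a / n) (real b / n) (real d / n)
    = C (real a / n) (real b / n) (real d / n)"
proof -
  have "grid_copula C n (real a / n) (real b / n) (real d / n)
      = (\<Sum>k<d. \<Sum>i<n. \<Sum>j<n. if i < a \<and> j < b then cell_mass C n i j k else 0)"
    unfolding grid_copula_eq
      integral_grid_corner[OF C n assms(3), of "\<lambda>p q. diag_cdf n p q (real a / n) (real b / n)"]
    using n
    by (intro sum.cong refl) (simp add: diag_cdf_grid)
  also have "\<dots> = (\<Sum>k<d. \<Sum>i<n. if i < a then \<Sum>j<n. if j < b then cell_mass C n i j k else 0 else 0)"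
    by (intro sum.cong refl) auto
  also have "\<dots> = (\<Sum>k<d. \<Sum>i<a. \<Sum>j<b. cell_mass C n i j k)"
    using assms by (simp add: sum_lessThan_if_less)
  also have "\<dots> = (\<Sum>i<a. \<Sum>j<b. \<Sum>k<d. cell_mass C n i j k)"
    by (rule sum_rotate3)
  also have "\<dots> = C (real a / n) (real b / n) (real d / n)"
    using sum_cell_mass_box[OF C n assms] .
  finally show ?thesis .
qed

lemma copula3_grid_copula: "copula3 (grid_copula C n)"
proof -
  let ?G = "\<lambda>u1 u2 t. diag_cdf n (grid_a C n t) (grid_b C n t) u1 u2"
  have G: "grid_copula C n u1 u2 v = (LINT t|lborel. indicator {0..v} t * ?G u1 u2 t)" for u1 u2 v
    unfolding grid_copula_eq set_lebesgue_integral_def by simp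
  have int: "integrable lborel (\<lambda>t. indicator {0..v} t * ?G u1 u2 t)" for u1 u2 v
    using diag_cdf_range
    by (intro integrableI_bounded_set[where A="{0..v}" and B=1]) (auto simp: emeasure_lborel_Icc_eq)
  have "0 \<le> vol3 (grid_copula C n) a1 b1 a2 b2 a3 b3"
    if "a1 \<le> b1" "a2 \<le> b2" "a3 \<le> b3" for a1 b1 a2 b2 a3 b3
  proof -
    have "vol3 (grid_copula C n) a1 b1 a2 b2 a3 b3 = (LINT t|lborel.
        (indicator {0..b3} t - indicator {0..a3} t) * (?G b1 b2 t - ?G a1 b2 t - ?G b1 a2 t + ?G a1 a2 t))"
      unfolding vol3_def G by (simp add: int algebra_simps)
    also have "\<dots> \<ge> 0"
    proof (intro Bochner_Integration.integral_nonneg mult_nonneg_nonneg)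
      fix t
      show "0 \<le> indicator {0..b3} t - (indicator {0..a3} t :: real)"
        using that by (auto simp: indicator_def)
      show "0 \<le> ?G b1 b2 t - ?G a1 b2 t - ?G b1 a2 t + ?G a1 a2 t"
        using grid_a_range[OF C n] grid_b_range[OF C n] that by (intro diag_cdf_increasing n) auto
    qed
    finally show ?thesis .
  qed
  moreover have "grid_copula C n 0 x y = 0" "grid_copula C n x 0 y = 0" for x y
    unfolding grid_copula_eq using grid_a_range[OF C n] grid_b_range[OF C n] n
    by (simp_all add: diag_cdf_0_left diag_cdf_0_right)
  moreover have "grid_copula C n x y 0 = 0" for x y
  proof -
    have "(\<lambda>t. indicator {0..0} t * ?G x y t) = (\<lambda>t. indicator {0} t * ?G x y 0)"
      by (auto simp: indicator_def)
    then show ?thesis by (simp add: G)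
  qed
  ultimately show ?thesis
    unfolding copula3_def vol3_def[symmetric]
    using grid_copula_margin1 grid_copula_margin2 grid_copula_margin3 by auto
qed

lemma cond_kernel_grid_copula: "cond_kernel (grid_copula C n) (grid_kernel C n)"
  unfolding cond_kernel_def
proof (intro conjI ballI measurable_grid_kernel prob_space_grid_kernel)
  fix t :: real
  interpret prob_space "grid_kernel C n t" by (rule prob_space_grid_kernel)
  show "emeasure (grid_kernel C n t) ({0..1} \<times> {0..1}) = 1"
    using grid_a_range[OF C n] grid_b_range[OF C n] n
    by (simp add: emeasure_eq_measure grid_kernel_box diag_cdf_1_1)
qed (simp add: grid_copula_def)

lemma cont_margins_grid_kernel: "cont_margins (grid_kernel C n)"
  unfolding cont_margins_def F13_def F23_def grid_kernel_box diag_cdf_def clamp01_def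
  by (intro AE_I2 impI conjI continuous_intros)

lemma simplified_grid_copula: "simplified (grid_copula C n)"
  unfolding simplified_def
proof (intro conjI exI[of _ "grid_kernel C n"] exI[of _ "min"] ballI copula3_grid_copula
    cond_kernel_grid_copula cont_margins_grid_kernel)
  show "copula2 min" unfolding copula2_def by (auto simp: min_def)
  fix u1 u2 v :: real
  have "(LINT t:{0..v}|lebesgue. min (F13 (grid_kernel C n) t u1) (F23 (grid_kernel C n) t u2))
      = (LINT t:{0..v}|lebesgue. diag_cdf n (grid_a C n t) (grid_b C n t) u1 u2)"
    unfolding F13_def F23_def grid_kernel_box using grid_a_range[OF C n] grid_b_range[OF C n] n
    by (simp add: diag_cdf_eq_min[symmetric])
  also have "\<dots> = grid_copula C n u1 u2 v"
    unfolding grid_copula_eq set_lebesgue_integral_def by (rule integral_completion) measurable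
  finally show "grid_copula C n u1 u2 v
      = (LINT t:{0..v}|lebesgue. min (F13 (grid_kernel C n) t u1) (F23 (grid_kernel C n) t u2))" ..
qed

lemma grid_copula_approx:
  assumes "{x, y, z} \<subseteq> {0..1}"
  shows "\<bar>C x y z - grid_copula C n x y z\<bar> \<le> 6 / n"
proof -
  obtain a where a: "a \<le> n" "\<bar>x - real a / n\<bar> \<le> 1 / n" using grid_rounding[of x n] assms n by auto
  obtain b where b: "b \<le> n" "\<bar>y - real b / n\<bar> \<le> 1 / n" using grid_rounding[of y n] assms n by auto
  obtain d where d: "d \<le> n" "\<bar>z - real d / n\<bar> \<le> 1 / n" using grid_rounding[of z n] assms n by auto
  note abd = a(1) b(1) d(1)
  have grid: "{real a / n, real b / n, real d / n} \<subseteq> {0..1}"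
    using abd grid_point_in_unit by auto
  have "\<bar>C x y z - C (real a / n) (real b / n) (real d / n)\<bar>
      \<le> \<bar>x - real a / n\<bar> + \<bar>y - real b / n\<bar> + \<bar>z - real d / n\<bar>"
    using grid assms by (intro copula3_lipschitz[OF C]) auto
  moreover have "\<bar>grid_copula C n x y z - grid_copula C n (real a / n) (real b / n) (real d / n)\<bar>
      \<le> \<bar>x - real a / n\<bar> + \<bar>y - real b / n\<bar> + \<bar>z - real d / n\<bar>"
    using grid assms by (intro copula3_lipschitz[OF copula3_grid_copula]) auto
  moreover have "6 / real n = 6 * (1 / n)" by simp
  ultimately show ?thesis using grid_copula_eq_on_grid[OF abd] a(2) b(2) d(2) by linarith
qed

end

section \<open>Density of simplified copulas\<close>

lemma d_inf_le:
  assumes "\<And>x y z. {x, y, z} \<subseteq> {0..1} \<Longrightarrow> \<bar>C x y z - D x y z\<bar> \<le> e"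
  shows "d_inf C D \<le> e"
  unfolding d_inf_def using assms by (intro cSUP_least) auto

lemma abs_diff_le_d_inf:
  assumes bound: "\<And>x y z. {x, y, z} \<subseteq> {0..1} \<Longrightarrow> \<bar>C x y z - D x y z\<bar> \<le> B"
    and "{x, y, z} \<subseteq> {0..1}"
  shows "\<bar>C x y z - D x y z\<bar> \<le> d_inf C D"
proof -
  let ?f = "\<lambda>p. \<bar>C (fst p) (fst (snd p)) (snd (snd p)) - D (fst p) (fst (snd p)) (snd (snd p))\<bar>"
  have "bdd_above (?f ` ({0..1} \<times> {0..1} \<times> {0..1}))"
    using bound by (intro bdd_aboveI2[where M = B]) auto
  then show ?thesis
    unfolding d_inf_def using cSUP_upper[of "(x, y, z)" _ ?f] assms(2) by auto
qed

lemma simplified_copulas_dense: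
  assumes C: "copula3 C" and e: "0 < e"
  shows "\<exists>D. simplified D \<and> d_inf C D < e"
proof -
  obtain n :: nat where n: "0 < n" "inverse (real n) < e / 6"
    using ex_inverse_of_nat_less[of "e / 6"] e by auto
  have "d_inf C (grid_copula C n) \<le> 6 / n"
    using grid_copula_approx[OF C n(1)] by (intro d_inf_le) auto
  also have "\<dots> < e" using n by (simp add: field_simps)
  finally show ?thesis using simplified_grid_copula[OF C n(1)] by blast
qed

lemma d_inf_pvc_pos:
  assumes C: "copula3 C" and K: "cond_kernel C K" and cont: "cont_margins K" and "\<not> simplified C"
  shows "0 < d_inf C (pvc K)"
proof (rule ccontr)
  assume "\<not> 0 < d_inf C (pvc K)"
  have "C x y z = pvc K x y z" if xyz: "{x, y, z} \<subseteq> {0..1}" for x y z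
  proof -
    have "\<bar>C x y z - pvc K x y z\<bar> \<le> d_inf C (pvc K)"
    proof (rule abs_diff_le_d_inf[OF _ xyz])
      fix x y z :: real assume "{x, y, z} \<subseteq> {0..1}"
      then have "\<bar>C x y z\<bar> \<le> 1" "\<bar>pvc K x y z\<bar> \<le> 1"
        using copula3_abs_le_1[OF C] pvc_abs_le_1[OF C K cont] by auto
      then show "\<bar>C x y z - pvc K x y z\<bar> \<le> 2"
        using abs_triangle_ineq4[of "C x y z" "pvc K x y z"] by linarith
    qed
    then show ?thesis using \<open>\<not> 0 < d_inf C (pvc K)\<close> by linarith
  qed
  then have "simplified C" by (intro simplified_if_eq_pvc[OF C K cont]) auto
  then show False using assms(4) by blast
qed

theorem theorem5p1:
  fixes C :: "real \<Rightarrow> real \<Rightarrow> real \<Rightarrow> real"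
    and K :: "real \<Rightarrow> (real \<times> real) measure"
  assumes "copula3 C"
    and "cond_kernel C K"
    and "cont_margins K"
    and "\<not> simplified C"
  shows "\<exists>D. simplified D \<and> d_inf C D < d_inf C (pvc K)"
  using simplified_copulas_dense[OF assms(1) d_inf_pvc_pos[OF assms]] .

end
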